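(* Let $n\ge2$, let $(K,g_K)$ be a closed Riemannian manifold of dimension $n-1$, let $f,\tilde f\in C^\infty([0,1])$ be positive, $M=[0,1]\times K$ with metrics $g=f(x)(dx^2+g_K)$, $\tilde g=\tilde f(x)(dx^2+g_K)$, and $\lambda\in\mathbb{R}$ outside the Dirichlet spectra of $-\Delta_g$ and $-\Delta_{\tilde g}$. Assume that for every $m\in\mathbb{N}$, $\det(\Lambda_g^m(\lambda))=\det(\Lambda_{\tilde g}^m(\lambda))$ and $\mathrm{Tr}(\Lambda_g^m(\lambda))=\mathrm{Tr}(\Lambda_{\tilde g}^m(\lambda))$. Then either ($f(0)=\tilde f(0)$ and $f(1)=\tilde f(1)$) or ($f(0)=\tilde f(1)$ and $f(1)=\tilde f(0)$).
   Context: Let $(Y_m)_{m\in\mathbb{N}}$ be an orthonormal basis of $L^2(K)$ of eigenfunctions of $-\Delta_{g_K}$ with eigenvalues $0=\mu_0<\mu_1\le\cdots\to\infty$. The DN map $\Lambda_g(\lambda)$ sends boundary data $\psi\in H^{1/2}(\partial M)=H^{1/2}(\{0\}\times K)\oplus H^{1/2}(\{1\}\times K)$ to the unit outer normal derivative $\partial_\nu u|_{\partial M}$ of the solution $u$ of $-\Delta_g u=\lambda u$, $u|_{\partial M}=\psi$. It maps the span of $(Y_m,0),(0,Y_m)$ into itself; $\Lambda_g^m(\lambda)$ is this restriction as a $2\times2$ matrix in that basis. Same for $\tilde g$. *)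

theory Defs
  imports "HOL-Analysis.Analysis"
begin

text \<open>Separating variables u = v(x) Y_m(y) in -Delta_g u = lam u, with
  -Delta_K Y_m = mu Y_m, gives the radial equation
  (h v')' = (h mu - lam rho) v,  h = f powr ((n-2)/2), rho = f powr (n/2).\<close>

definition radial_bvp_sol ::
  "(real \<Rightarrow> real) \<Rightarrow> nat \<Rightarrow> real \<Rightarrow> real \<Rightarrow> real \<Rightarrow> real
     \<Rightarrow> (real \<Rightarrow> real) \<Rightarrow> (real \<Rightarrow> real) \<Rightarrow> bool" where
  "radial_bvp_sol f n mu lam a b v w \<longleftrightarrow>
     v 0 = a \<and> v 1 = b \<and>
     (\<forall>x\<in>{0..1}.
        (v has_real_derivative w x) (at x within {0..1}) \<and>
        ((\<lambda>t. f t powr ((real n - 2) / 2) * w t) has_real_derivative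
           ((f x powr ((real n - 2) / 2) * mu - lam * f x powr (real n / 2)) * v x))
          (at x within {0..1}))"

text \<open>Dirichlet-to-Neumann map on the m-th mode: boundary data (a,b) = values at
  {0} x K and {1} x K; output = unit outer normal derivatives
  (-f(0)^(-1/2) v'(0), f(1)^(-1/2) v'(1)).\<close>

definition dn_mode :: "(real \<Rightarrow> real) \<Rightarrow> nat \<Rightarrow> real \<Rightarrow> real \<Rightarrow> real \<Rightarrow> real \<Rightarrow> real \<times> real" where
  "dn_mode f n mu lam a b =
     (THE pq. \<exists>v w. radial_bvp_sol f n mu lam a b v w \<and>
                   pq = (- w 0 / sqrt (f 0), w 1 / sqrt (f 1)))"

text \<open>The 2x2 matrix of the DN map restricted to span{(Y_m,0),(0,Y_m)}:
  column j is the image of the j-th basis vector.\<close>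

definition dn_matrix :: "(real \<Rightarrow> real) \<Rightarrow> nat \<Rightarrow> real \<Rightarrow> real \<Rightarrow> real^2^2" where
  "dn_matrix f n mu lam =
     (\<chi> i j. let pq = (if j = 1 then dn_mode f n mu lam 1 0 else dn_mode f n mu lam 0 1)
             in if i = 1 then fst pq else snd pq)"

text \<open>lam is not a Dirichlet eigenvalue of -Delta_g (expressed mode-wise:
  the homogeneous radial problem has only the trivial solution for every mode).\<close>

definition not_dirichlet_eigenvalue :: "(real \<Rightarrow> real) \<Rightarrow> nat \<Rightarrow> (nat \<Rightarrow> real) \<Rightarrow> real \<Rightarrow> bool" where
  "not_dirichlet_eigenvalue f n mu lam \<longleftrightarrow>
     (\<forall>m v w. radial_bvp_sol f n (mu m) lam 0 0 v w \<longrightarrow> (\<forall>x\<in>{0..1}. v x = 0))"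

definition smooth_fun :: "(real \<Rightarrow> real) \<Rightarrow> bool" where
  "smooth_fun f \<longleftrightarrow>
     (\<forall>k x. ((deriv ^^ k) f has_real_derivative (deriv ^^ Suc k) f x) (at x))"

end

theory Submission
  imports Defs "HOL-Real_Asymp.Real_Asymp"
begin

text \<open>For the \<open>m\<close>-th mode the Dirichlet-to-Neumann map is governed by the radial
  Sturm--Liouville problem \<open>(h v')' = (h \<mu> - \<lambda> \<rho>) v\<close> on \<open>[0, 1]\<close>, \<open>\<mu> = \<mu>\<^sub>m\<close>.
  For large \<open>\<mu>\<close> the potential is positive, so a maximum principle makes the boundary value
  problem uniquely solvable and allows comparison with exponential barriers
  \<open>e\<^sup>\<plusminus>\<^sup>c\<^sup>x\<close>, \<open>c = \<surd>\<mu> (1 \<plusminus> \<mu>\<^sup>-\<^sup>1\<^sup>/\<^sup>4)\<close>. Squeezing the boundary slopes between the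
  barriers gives \<open>\<Lambda>\<^sup>m / \<surd>\<mu>\<^sub>m \<rightarrow> diag (f(0)\<^sup>-\<^sup>1\<^sup>/\<^sup>2, f(1)\<^sup>-\<^sup>1\<^sup>/\<^sup>2)\<close>. Hence the traces
  and determinants determine the sum and the product, i.e.\ the unordered pair, of
  \<open>f(0)\<^sup>-\<^sup>1\<^sup>/\<^sup>2\<close> and \<open>f(1)\<^sup>-\<^sup>1\<^sup>/\<^sup>2\<close>. Only the modes \<open>m \<rightarrow> \<infinity>\<close> enter.\<close>

lemma left_endpoint_min_imp_deriv_nonneg:
  fixes g :: "real \<Rightarrow> real"
  assumes "a < b" and "\<forall>x\<in>{a..b}. g a \<le> g x"
    and "(g has_real_derivative D) (at a within {a..b})"
  shows "D \<ge> 0"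
proof -
  have "((\<lambda>y. (g y - g a) / (y - a)) \<longlongrightarrow> D) (at a within {a..b})"
    using assms(3) has_field_derivative_iff by blast
  moreover have "eventually (\<lambda>y. (g y - g a) / (y - a) \<ge> 0) (at a within {a..b})"
    unfolding eventually_at_filter using assms(2) by (auto intro!: always_eventually)
  moreover have "at a within {a..b} \<noteq> bot"
    using assms(1) by (simp add: at_within_Icc_at_right)
  ultimately show ?thesis by (rule tendsto_lowerbound)
qed

lemma right_endpoint_min_imp_deriv_nonpos:
  fixes g :: "real \<Rightarrow> real"
  assumes "a < b" and "\<forall>x\<in>{a..b}. g b \<le> g x"
    and "(g has_real_derivative D) (at b within {a..b})"
  shows "D \<le> 0"
proof -
  have "((\<lambda>y. (g y - g b) / (y - b)) \<longlongrightarrow> D) (at b within {a..b})"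
    using assms(3) has_field_derivative_iff by blast
  moreover have "eventually (\<lambda>y. (g y - g b) / (y - b) \<le> 0) (at b within {a..b})"
    unfolding eventually_at_filter using assms(2)
    by (auto intro!: always_eventually simp: divide_nonneg_neg)
  moreover have "at b within {a..b} \<noteq> bot"
    using assms(1) by (simp add: at_within_Icc_at_left)
  ultimately show ?thesis by (rule tendsto_upperbound)
qed

lemma increasing_into_critical_point:
  fixes d d' p r :: "real \<Rightarrow> real"
  assumes "y0 < x0" and p: "\<forall>x\<in>{y0..x0}. p x > 0"
    and d': "\<forall>x\<in>{y0..x0}. (d has_real_derivative d' x) (at x)"
    and flux: "\<forall>x\<in>{y0..x0}. ((\<lambda>t. p t * d' t) has_real_derivative r x) (at x)"
    and r: "\<forall>x\<in>{y0<..<x0}. r x < 0" and "d' x0 = 0"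
  shows "d y0 < d x0"
proof -
  have "d' t > 0" if t: "y0 \<le> t" "t < x0" for t
  proof -
    obtain z where z: "t < z" "z < x0" "p x0 * d' x0 - p t * d' t = (x0 - t) * r z"
      using MVT2[OF t(2), of "\<lambda>t. p t * d' t" r] flux t by force
    have "(x0 - t) * r z < 0" using r z t by (intro mult_pos_neg) auto
    then have "p t * d' t > 0" using z(3) \<open>d' x0 = 0\<close> by simp
    moreover have "p t > 0" using p t by auto
    ultimately show ?thesis by (simp add: zero_less_mult_iff)
  qed
  moreover obtain z where "y0 < z" "z < x0" "d x0 - d y0 = (x0 - y0) * d' z"
    using MVT2[OF \<open>y0 < x0\<close>, of d d'] d' by force
  ultimately show ?thesis by (smt (verit) mult_pos_pos)
qed

text \<open>A negative interior minimum of \<open>d\<close> is impossible: near it \<open>p d'\<close> decreases strictly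
  to \<open>0\<close>, so \<open>d\<close> increases into the minimum.\<close>

lemma max_principle:
  fixes d d' p q r :: "real \<Rightarrow> real"
  assumes p: "\<forall>x\<in>{a..b}. p x > 0" and q: "\<forall>x\<in>{a..b}. q x > 0"
    and d': "\<forall>x\<in>{a..b}. (d has_real_derivative d' x) (at x within {a..b})"
    and flux: "\<forall>x\<in>{a<..<b}. ((\<lambda>t. p t * d' t) has_real_derivative r x) (at x)"
    and r: "\<forall>x\<in>{a<..<b}. r x \<le> q x * d x"
    and "d a \<ge> 0" "d b \<ge> 0"
  shows "\<forall>x\<in>{a..b}. d x \<ge> 0"
proof (rule ccontr)
  assume "\<not> ?thesis"
  then obtain x1 where x1: "x1 \<in> {a..b}" "d x1 < 0" by force
  have "continuous_on {a..b} d" using d' by (intro DERIV_continuous_on) auto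
  then obtain x0 where x0: "x0 \<in> {a..b}" "\<forall>y\<in>{a..b}. d x0 \<le> d y"
    using continuous_attains_inf[OF compact_Icc _ \<open>continuous_on {a..b} d\<close>] x1(1) by auto
  have "d x0 < 0" using x0 x1 by force
  with x0 \<open>d a \<ge> 0\<close> \<open>d b \<ge> 0\<close> have "a < x0" "x0 < b"
    by (metis atLeastAtMost_iff less_eq_real_def not_le)+
  have d'_at: "(d has_real_derivative d' x) (at x)" if "a < x" "x < b" for x
    using d' that at_within_Icc_at[OF that] by (metis atLeastAtMost_iff less_eq_real_def)
  have "d' x0 = 0"
  proof (rule DERIV_local_min[OF d'_at[OF \<open>a < x0\<close> \<open>x0 < b\<close>]])
    show "0 < min (x0 - a) (b - x0)" using \<open>a < x0\<close> \<open>x0 < b\<close> by simp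
    show "\<forall>y. \<bar>x0 - y\<bar> < min (x0 - a) (b - x0) \<longrightarrow> d x0 \<le> d y"
      using x0(2) by (auto simp: abs_if split: if_splits)
  qed
  have "(d \<longlongrightarrow> d x0) (at_left x0)"
    using DERIV_isCont[OF d'_at[OF \<open>a < x0\<close> \<open>x0 < b\<close>]] by (simp add: isCont_def filterlim_at_split)
  then have "eventually (\<lambda>y. d y < 0) (at_left x0)"
    using \<open>d x0 < 0\<close> by (rule order_tendstoD)
  then obtain c where c: "c < x0" "\<And>y. c < y \<Longrightarrow> y < x0 \<Longrightarrow> d y < 0"
    unfolding eventually_at_left_field by blast
  define y0 where "y0 = (max a c + x0) / 2"
  have y0: "a < y0" "c < y0" "y0 < x0"
    using c(1) \<open>a < x0\<close> by (auto simp: y0_def)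
  have neg: "d t < 0" if "y0 \<le> t" "t \<le> x0" for t
    using that c(2)[of t] \<open>d x0 < 0\<close> y0 by (cases "t = x0") auto
  have "\<forall>x\<in>{y0..x0}. p x > 0" "\<forall>x\<in>{y0..x0}. (d has_real_derivative d' x) (at x)"
    "\<forall>x\<in>{y0..x0}. ((\<lambda>t. p t * d' t) has_real_derivative r x) (at x)"
    using p d'_at flux y0 \<open>x0 < b\<close> by auto
  moreover have "\<forall>x\<in>{y0<..<x0}. r x < 0"
  proof
    fix x assume "x \<in> {y0<..<x0}"
    with r q neg[of x] y0 \<open>x0 < b\<close> have "r x \<le> q x * d x" "q x * d x < 0"
      by (auto intro: mult_pos_neg)
    then show "r x < 0" by linarith
  qed
  ultimately have "d y0 < d x0"
    using increasing_into_critical_point[OF y0(3)] \<open>d' x0 = 0\<close> by blast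
  moreover have "y0 \<in> {a..b}" using y0 \<open>x0 < b\<close> by simp
  ultimately show False using x0(2) by force
qed

lemma sum_prod_eq_imp_eq_or_swap:
  fixes a b c d :: "'a :: idom"
  assumes "a + b = c + d" "a * b = c * d"
  shows "(a = c \<and> b = d) \<or> (a = d \<and> b = c)"
proof -
  have d: "d = a + b - c" using assms(1) by (simp add: algebra_simps)
  have "(a - c) * (c - b) = c * d - a * b" unfolding d by (simp add: algebra_simps)
  with assms(2) have "a = c \<or> c = b" by simp
  then show ?thesis using d by auto
qed

lemma tendsto_sandwich_divide:
  fixes X L U g :: "'a \<Rightarrow> real"
  assumes "eventually (\<lambda>x. X x \<in> {L x .. U x} \<and> 0 < g x) F"
    and "((\<lambda>x. L x / g x) \<longlongrightarrow> c) F" and "((\<lambda>x. U x / g x) \<longlongrightarrow> c) F"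
  shows "((\<lambda>x. X x / g x) \<longlongrightarrow> c) F"
proof (rule tendsto_sandwich[OF _ _ assms(2,3)])
  show "eventually (\<lambda>x. L x / g x \<le> X x / g x) F" "eventually (\<lambda>x. X x / g x \<le> U x / g x) F"
    using assms(1) by (auto elim!: eventually_mono intro: divide_right_mono)
qed

lemma tendsto_scaled_compose:
  fixes X mu :: "_ \<Rightarrow> real"
  assumes "((\<lambda>\<mu>. c * X \<mu> / sqrt \<mu>) \<longlongrightarrow> l) at_top" "c \<noteq> 0" "filterlim mu at_top F"
  shows "((\<lambda>m. X (mu m) / sqrt (mu m)) \<longlongrightarrow> l / c) F"
proof -
  have "((\<lambda>\<mu>. c * X \<mu> / sqrt \<mu> / c) \<longlongrightarrow> l / c) at_top"
    using assms(1) by (rule tendsto_divide) (use assms(2) in auto)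
  then have "((\<lambda>\<mu>. X \<mu> / sqrt \<mu>) \<longlongrightarrow> l / c) at_top" using assms(2) by simp
  from filterlim_compose[OF this assms(3)] show ?thesis by simp
qed

lemma dist_Pair_le: "dist (a, b) (c, d) \<le> dist a c + dist b d"
  using dist_triangle[of "(a, b)" "(c, d)" "(c, b)"] by (simp add: dist_Pair_Pair)

lemma has_real_derivative_reflect_unit:
  assumes "(f has_real_derivative D) (at (1 - x) within {0..1})"
  shows "((\<lambda>t. f (1 - t)) has_real_derivative - D) (at x within {0..1})"
proof -
  have "(\<lambda>t. 1 - t) ` {0..1} = {0..1::real}"
    using image_diff_atLeastAtMost[of 1 0 1] by simp
  then have "(f has_real_derivative D) (at ((\<lambda>t. 1 - t) x) within (\<lambda>t. 1 - t) ` {0..1})"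
    using assms by simp
  moreover have "((\<lambda>t. 1 - t) has_real_derivative - 1) (at x within {0..1})"
    by (auto intro!: derivative_eq_intros)
  ultimately have "(f \<circ> (\<lambda>t. 1 - t) has_real_derivative D * - 1) (at x within {0..1})"
    by (rule DERIV_image_chain)
  then show ?thesis by (simp add: o_def)
qed

section \<open>Linear initial value problems\<close>

definition clamped_extension :: "(real \<Rightarrow> real) \<Rightarrow> real \<Rightarrow>\<^sub>C real" where
  "clamped_extension f = (SOME g. \<forall>x. apply_bcontfun g x = f (clamp 0 1 x))"

lemma clamped_extension_apply:
  assumes "continuous_on {0..1} f"
  shows "clamped_extension f x = f (clamp 0 1 x)"
proof -
  have "continuous_on (cbox 0 1) f" using assms by simp
  then obtain g :: "real \<Rightarrow>\<^sub>C real" where "\<And>x. g x = f (clamp 0 1 x)"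
    by (rule continuous_on_cbox_bcontfunE) blast
  then have "\<exists>g :: real \<Rightarrow>\<^sub>C real. \<forall>x. g x = f (clamp 0 1 x)" by blast
  then show ?thesis
    unfolding clamped_extension_def
    by (rule someI_ex[where P = "\<lambda>g. \<forall>x. apply_bcontfun g x = f (clamp 0 1 x)", THEN spec])
qed

lemma clamp_unit_in: "clamp 0 1 (x::real) \<in> {0..1}"
  using clamp_in_interval[of 0 1 x] by (simp add: cbox_interval)

lemma clamp_unit_id: "(x::real) \<in> {0..1} \<Longrightarrow> clamp 0 1 x = x"
  using clamp_cancel_cbox[of x 0 1] by (simp add: cbox_interval)

text \<open>Writing a solution of \<open>V' = g P\<close> as \<open>V = e\<^sup>K\<^sup>x Z\<close>, the integral equation for \<open>V\<close> becomes
  \<open>Z = weighted_volterra K (V 0) g (e\<^sup>-\<^sup>K\<^sup>x P)\<close>; the weight \<open>e\<^sup>-\<^sup>K\<^sup>x\<close> makes this a contraction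
  with constant \<open>sup \<bar>g\<bar> / K\<close> in the sup norm.\<close>

definition weighted_volterra :: "real \<Rightarrow> real \<Rightarrow> (real \<Rightarrow> real) \<Rightarrow> (real \<Rightarrow> real) \<Rightarrow> real \<Rightarrow> real" where
  "weighted_volterra K c g z y =
    exp (- K * y) * (c + integral {0..y} (\<lambda>t. exp (K * t) * (g t * z t)))"

lemma integral_exp_linear:
  fixes K y :: real
  assumes "K > 0" "0 \<le> y"
  shows "integral {0..y} (\<lambda>t. exp (K * t)) = (exp (K * y) - 1) / K"
proof -
  have "((\<lambda>t. exp (K * t)) has_integral (exp (K * y) / K - exp (K * 0) / K)) {0..y}"
    using assms by (intro fundamental_theorem_of_calculus)
      (auto intro!: derivative_eq_intros simp flip: has_real_derivative_iff_has_vector_derivative)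
  then show ?thesis by (simp add: integral_unique diff_divide_distrib)
qed

lemma weighted_integral_bound:
  fixes K y M :: real and G :: "real \<Rightarrow> real"
  assumes K: "K > 0" and y: "0 \<le> y" and G: "continuous_on {0..y} G"
    and M: "\<forall>t\<in>{0..y}. \<bar>G t\<bar> \<le> M"
  shows "exp (- K * y) * \<bar>integral {0..y} (\<lambda>t. exp (K * t) * G t)\<bar> \<le> M / K"
proof -
  have M_nonneg: "M \<ge> 0" using M y by (metis abs_ge_zero atLeastAtMost_iff order.trans order_refl)
  have "norm (integral {0..y} (\<lambda>t. exp (K * t) * G t)) \<le> integral {0..y} (\<lambda>t. M * exp (K * t))"
  proof (rule integral_norm_bound_integral)
    show "(\<lambda>t. exp (K * t) * G t) integrable_on {0..y}" "(\<lambda>t. M * exp (K * t)) integrable_on {0..y}"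
      by (intro integrable_continuous_real continuous_intros G)+
    show "norm (exp (K * t) * G t) \<le> M * exp (K * t)" if "t \<in> {0..y}" for t
      using M that by (simp add: abs_mult mult.commute mult_right_mono)
  qed
  then have "\<bar>integral {0..y} (\<lambda>t. exp (K * t) * G t)\<bar> \<le> integral {0..y} (\<lambda>t. M * exp (K * t))"
    by simp
  also have "\<dots> = M * ((exp (K * y) - 1) / K)" using integral_exp_linear[OF K y] by simp
  finally have "exp (- K * y) * \<bar>integral {0..y} (\<lambda>t. exp (K * t) * G t)\<bar>
      \<le> exp (- K * y) * (M * ((exp (K * y) - 1) / K))"
    by (intro mult_left_mono) auto
  also have "\<dots> = M * (1 - exp (- K * y)) / K"
    by (simp add: algebra_simps diff_divide_distrib flip: exp_add)
  also have "\<dots> \<le> M / K"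
    using K M_nonneg by (intro divide_right_mono mult_left_le) auto
  finally show ?thesis .
qed

lemma weighted_volterra_continuous:
  assumes "continuous_on {0..1} g"
  shows "continuous_on {0..1} (weighted_volterra K c g (apply_bcontfun z))"
proof -
  have "continuous_on {0..1} (\<lambda>t. exp (K * t) * (g t * z t))"
    by (intro continuous_intros assms continuous_on_apply_bcontfun)
  from integral_has_real_derivative[OF this]
  have "continuous_on {0..1} (\<lambda>y. integral {0..y} (\<lambda>t. exp (K * t) * (g t * z t)))"
    by (intro DERIV_continuous_on) blast
  then show ?thesis unfolding weighted_volterra_def by (intro continuous_intros)
qed

lemma weighted_volterra_lipschitz:
  fixes z z' :: "real \<Rightarrow>\<^sub>C real"
  assumes g: "continuous_on {0..1} g" and B: "\<forall>x\<in>{0..1}. \<bar>g x\<bar> \<le> B" and K: "K > 0"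
  shows "dist (clamped_extension (weighted_volterra K c g z))
      (clamped_extension (weighted_volterra K c g z')) \<le> B * dist z z' / K"
proof (rule dist_bound)
  fix x :: real
  define y where "y = clamp 0 1 x"
  have y: "y \<in> {0..1}" unfolding y_def by (rule clamp_unit_in)
  have integrable: "(\<lambda>t. exp (K * t) * (g t * w t)) integrable_on {0..y}" for w :: "real \<Rightarrow>\<^sub>C real"
    using y by (intro integrable_continuous_real continuous_intros continuous_on_subset[OF g]
        continuous_on_apply_bcontfun) auto
  have "weighted_volterra K c g z y - weighted_volterra K c g z' y =
      exp (- K * y) * integral {0..y} (\<lambda>t. exp (K * t) * (g t * (z t - z' t)))"
  proof -
    have diff: "(\<lambda>t. exp (K * t) * (g t * (z t - z' t)))
        = (\<lambda>t. exp (K * t) * (g t * z t) - exp (K * t) * (g t * z' t))"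
      by (simp add: algebra_simps)
    show ?thesis
      unfolding weighted_volterra_def diff integral_diff[OF integrable integrable]
      by (simp add: algebra_simps)
  qed
  moreover have "exp (- K * y) * \<bar>integral {0..y} (\<lambda>t. exp (K * t) * (g t * (z t - z' t)))\<bar>
      \<le> B * dist z z' / K"
  proof (rule weighted_integral_bound[OF K])
    show "continuous_on {0..y} (\<lambda>t. g t * (z t - z' t))"
      using y by (intro continuous_intros continuous_on_subset[OF g]
          continuous_on_apply_bcontfun) auto
    show "\<forall>t\<in>{0..y}. \<bar>g t * (z t - z' t)\<bar> \<le> B * dist z z'"
      using B y dist_bounded[of z _ z'] unfolding abs_mult
      by (auto simp: dist_real_def intro!: mult_mono')
  qed (use y in simp)
  ultimately show "dist (clamped_extension (weighted_volterra K c g z) x)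
      (clamped_extension (weighted_volterra K c g z') x) \<le> B * dist z z' / K"
    by (simp add: clamped_extension_apply[OF weighted_volterra_continuous[OF g]]
        dist_real_def abs_mult flip: y_def)
qed

lemma weighted_volterra_system_fixed_point:
  fixes g1 g2 :: "real \<Rightarrow> real"
  assumes g1: "continuous_on {0..1} g1" and g2: "continuous_on {0..1} g2"
  obtains K and Z1 Z2 :: "real \<Rightarrow>\<^sub>C real"
  where "\<forall>y\<in>{0..1}. Z1 y = weighted_volterra K V0 g1 Z2 y"
    and "\<forall>y\<in>{0..1}. Z2 y = weighted_volterra K P0 g2 Z1 y"
proof -
  obtain B1 B2 where B1: "\<forall>x\<in>{0..1}. \<bar>g1 x\<bar> \<le> B1" and B2: "\<forall>x\<in>{0..1}. \<bar>g2 x\<bar> \<le> B2"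
    using continuous_on_compact_bound[OF compact_Icc g1]
      continuous_on_compact_bound[OF compact_Icc g2]
    by (metis real_norm_def)
  define B where "B = max B1 B2 + 1"
  have "B > 0" using B1 by (force simp: B_def)
  define K where "K = 4 * B"
  have K: "K > 0" and BK: "B / K = 1 / 4" using \<open>B > 0\<close> by (simp_all add: K_def)
  have bounds: "\<forall>x\<in>{0..1}. \<bar>g1 x\<bar> \<le> B" "\<forall>x\<in>{0..1}. \<bar>g2 x\<bar> \<le> B"
    using B1 B2 by (force simp: B_def)+
  define T1 where "T1 z = clamped_extension (weighted_volterra K V0 g1 z)" for z :: "real \<Rightarrow>\<^sub>C real"
  define T2 where "T2 z = clamped_extension (weighted_volterra K P0 g2 z)" for z :: "real \<Rightarrow>\<^sub>C real"
  have T1: "dist (T1 z) (T1 z') \<le> 1 / 4 * dist z z'"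
    and T2: "dist (T2 z) (T2 z') \<le> 1 / 4 * dist z z'" for z z'
    using weighted_volterra_lipschitz[OF g1 bounds(1) K, of V0 z z']
      weighted_volterra_lipschitz[OF g2 bounds(2) K, of P0 z z'] BK
    by (simp_all add: T1_def T2_def)
  define \<Phi> where "\<Phi> Z = (T1 (snd Z), T2 (fst Z))" for Z
  have "dist (\<Phi> Z) (\<Phi> Z') \<le> 1 / 2 * dist Z Z'" for Z Z'
  proof -
    have "dist (\<Phi> Z) (\<Phi> Z') \<le> dist (T1 (snd Z)) (T1 (snd Z')) + dist (T2 (fst Z)) (T2 (fst Z'))"
      unfolding \<Phi>_def by (rule dist_Pair_le)
    also have "\<dots> \<le> 1 / 4 * dist (snd Z) (snd Z') + 1 / 4 * dist (fst Z) (fst Z')"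
      using T1 T2 by (rule add_mono)
    also have "\<dots> \<le> 1 / 2 * dist Z Z'"
      using dist_fst_le[of Z Z'] dist_snd_le[of Z Z'] by simp
    finally show ?thesis .
  qed
  then obtain Z where "\<Phi> Z = Z" using banach_fix_type[of "1 / 2" \<Phi>] by auto
  then obtain Z1 Z2 where "T1 Z2 = Z1" "T2 Z1 = Z2"
    unfolding \<Phi>_def by (metis prod.collapse prod.inject)
  moreover have "T1 z y = weighted_volterra K V0 g1 z y" "T2 z y = weighted_volterra K P0 g2 z y"
    if "y \<in> {0..1}" for z y
    using that unfolding T1_def T2_def
    by (simp_all add: clamped_extension_apply[OF weighted_volterra_continuous[OF g1]]
        clamped_extension_apply[OF weighted_volterra_continuous[OF g2]] clamp_unit_id)
  ultimately have "\<forall>y\<in>{0..1}. Z1 y = weighted_volterra K V0 g1 Z2 y"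
    "\<forall>y\<in>{0..1}. Z2 y = weighted_volterra K P0 g2 Z1 y"
    by metis+
  then show thesis using that by blast
qed

lemma linear_ivp_exists:
  fixes g1 g2 :: "real \<Rightarrow> real"
  assumes g1: "continuous_on {0..1} g1" and g2: "continuous_on {0..1} g2"
  obtains V P where "V 0 = V0" "P 0 = P0"
    "\<forall>x\<in>{0..1}. (V has_real_derivative g1 x * P x) (at x within {0..1}) \<and>
       (P has_real_derivative g2 x * V x) (at x within {0..1})"
proof -
  obtain K and Z1 Z2 :: "real \<Rightarrow>\<^sub>C real" where Z1: "\<forall>y\<in>{0..1}. Z1 y = weighted_volterra K V0 g1 Z2 y"
    and Z2: "\<forall>y\<in>{0..1}. Z2 y = weighted_volterra K P0 g2 Z1 y"
    by (rule weighted_volterra_system_fixed_point[OF g1 g2])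
  define V where "V y = V0 + integral {0..y} (\<lambda>t. exp (K * t) * (g1 t * Z2 t))" for y
  define P where "P y = P0 + integral {0..y} (\<lambda>t. exp (K * t) * (g2 t * Z1 t))" for y
  have V: "V y = exp (K * y) * Z1 y" and P: "P y = exp (K * y) * Z2 y" if "y \<in> {0..1}" for y
    using bspec[OF Z1 that] bspec[OF Z2 that]
    by (simp_all add: weighted_volterra_def V_def P_def mult.assoc flip: exp_add)
  have "continuous_on {0..1} (\<lambda>t. exp (K * t) * (g1 t * Z2 t))"
    by (intro continuous_intros g1 continuous_on_apply_bcontfun)
  then have dV: "(V has_real_derivative g1 x * P x) (at x within {0..1})" if "x \<in> {0..1}" for x
  proof -
    have "(V has_real_derivative 0 + exp (K * x) * (g1 x * Z2 x)) (at x within {0..1})"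
      unfolding V_def by (intro DERIV_add DERIV_const integral_has_real_derivative that) fact
    then show ?thesis using P[OF that] by (simp add: mult.left_commute)
  qed
  have "continuous_on {0..1} (\<lambda>t. exp (K * t) * (g2 t * Z1 t))"
    by (intro continuous_intros g2 continuous_on_apply_bcontfun)
  then have dP: "(P has_real_derivative g2 x * V x) (at x within {0..1})" if "x \<in> {0..1}" for x
  proof -
    have "(P has_real_derivative 0 + exp (K * x) * (g2 x * Z1 x)) (at x within {0..1})"
      unfolding P_def by (intro DERIV_add DERIV_const integral_has_real_derivative that) fact
    then show ?thesis using V[OF that] by (simp add: mult.left_commute)
  qed
  have "V 0 = V0" "P 0 = P0" by (simp_all add: V_def P_def)
  with dV dP show thesis by (intro that[of V P]) auto
qed

section \<open>Sturm--Liouville problems with positive potential\<close>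

definition exp_barrier :: "real \<Rightarrow> real \<Rightarrow> real \<Rightarrow> real \<Rightarrow> real \<Rightarrow> real \<Rightarrow> real" where
  "exp_barrier \<alpha> a \<beta> b \<gamma> x = \<alpha> * exp (a * x) + \<beta> * exp (b * x) + \<gamma>"

definition exp_barrier' :: "real \<Rightarrow> real \<Rightarrow> real \<Rightarrow> real \<Rightarrow> real \<Rightarrow> real" where
  "exp_barrier' \<alpha> a \<beta> b x = \<alpha> * a * exp (a * x) + \<beta> * b * exp (b * x)"

lemma exp_barrier_has_derivative:
  "(exp_barrier \<alpha> a \<beta> b \<gamma> has_real_derivative exp_barrier' \<alpha> a \<beta> b x) (at x)"
  unfolding exp_barrier_def exp_barrier'_def by (auto intro!: derivative_eq_intros)

locale sturm_liouville =
  fixes h h' q :: "real \<Rightarrow> real"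
  assumes h_pos: "\<forall>x\<in>{0..1}. h x > 0"
    and h_deriv: "\<forall>x\<in>{0..1}. (h has_real_derivative h' x) (at x)"
    and q_pos: "\<forall>x\<in>{0..1}. q x > 0"
begin

definition solution :: "(real \<Rightarrow> real) \<Rightarrow> (real \<Rightarrow> real) \<Rightarrow> bool" where
  "solution v w \<longleftrightarrow> (\<forall>x\<in>{0..1}. (v has_real_derivative w x) (at x within {0..1}) \<and>
      ((\<lambda>t. h t * w t) has_real_derivative q x * v x) (at x within {0..1}))"

definition supersolution :: "(real \<Rightarrow> real) \<Rightarrow> (real \<Rightarrow> real) \<Rightarrow> bool" where
  "supersolution u u' \<longleftrightarrow> (\<forall>x\<in>{0..1}. (u has_real_derivative u' x) (at x within {0..1})) \<and>
     (\<forall>x\<in>{0<..<1}. \<exists>r. ((\<lambda>t. h t * u' t) has_real_derivative r) (at x) \<and> r \<le> q x * u x)"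

definition subsolution :: "(real \<Rightarrow> real) \<Rightarrow> (real \<Rightarrow> real) \<Rightarrow> bool" where
  "subsolution u u' \<longleftrightarrow> supersolution (\<lambda>x. - u x) (\<lambda>x. - u' x)"

text \<open>\<open>(h (e\<^sup>c\<^sup>x)')' - q e\<^sup>c\<^sup>x = exp_defect c x \<cdot> e\<^sup>c\<^sup>x\<close>\<close>

definition exp_defect :: "real \<Rightarrow> real \<Rightarrow> real" where
  "exp_defect c x = h x * c\<^sup>2 + h' x * c - q x"

lemma solution_lincomb:
  assumes "solution v1 w1" "solution v2 w2"
  shows "solution (\<lambda>x. c1 * v1 x + c2 * v2 x) (\<lambda>x. c1 * w1 x + c2 * w2 x)"
  unfolding solution_def
proof
  fix x :: real assume x: "x \<in> {0..1}"
  have "((\<lambda>t. c1 * (h t * w1 t) + c2 * (h t * w2 t)) has_real_derivative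
      c1 * (q x * v1 x) + c2 * (q x * v2 x)) (at x within {0..1})"
    using assms x unfolding solution_def by (intro DERIV_add DERIV_cmult) auto
  then have "((\<lambda>t. h t * (c1 * w1 t + c2 * w2 t)) has_real_derivative
      q x * (c1 * v1 x + c2 * v2 x)) (at x within {0..1})"
    by (simp add: algebra_simps)
  moreover have "((\<lambda>x. c1 * v1 x + c2 * v2 x) has_real_derivative c1 * w1 x + c2 * w2 x)
      (at x within {0..1})"
    using assms x unfolding solution_def by (intro DERIV_add DERIV_cmult) auto
  ultimately show "((\<lambda>x. c1 * v1 x + c2 * v2 x) has_real_derivative c1 * w1 x + c2 * w2 x)
      (at x within {0..1}) \<and> ((\<lambda>t. h t * (c1 * w1 t + c2 * w2 t)) has_real_derivative
      q x * (c1 * v1 x + c2 * v2 x)) (at x within {0..1})"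
    by blast
qed

lemma solution_uminus: "solution v w \<Longrightarrow> solution (\<lambda>x. - v x) (\<lambda>x. - w x)"
  using solution_lincomb[of v w v w "-1" 0] by simp

lemma solution_le_supersolution:
  assumes v: "solution v w" and u: "supersolution u u'" and "v 0 \<le> u 0" "v 1 \<le> u 1"
  shows "\<forall>x\<in>{0..1}. v x \<le> u x"
    and "v 0 = u 0 \<Longrightarrow> w 0 \<le> u' 0" and "v 1 = u 1 \<Longrightarrow> u' 1 \<le> w 1"
proof -
  have d': "\<forall>x\<in>{0..1}. ((\<lambda>x. u x - v x) has_real_derivative u' x - w x) (at x within {0..1})"
    using u v unfolding supersolution_def solution_def by (auto intro!: DERIV_diff)
  have "\<forall>x\<in>{0<..<1}. \<exists>r. ((\<lambda>t. h t * u' t) has_real_derivative r) (at x) \<and> r \<le> q x * u x"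
    using u unfolding supersolution_def by blast
  from bchoice[OF this] obtain r where r: "\<forall>x\<in>{0<..<1}.
      ((\<lambda>t. h t * u' t) has_real_derivative r x) (at x) \<and> r x \<le> q x * u x"
    by blast
  have "\<forall>x\<in>{0<..<1}. ((\<lambda>t. h t * (u' t - w t)) has_real_derivative r x - q x * v x) (at x)"
  proof
    fix x :: real assume x: "x \<in> {0<..<1}"
    have "x \<in> {0..1}" "at x within {0..1} = at x"
      using x by (auto intro: at_within_Icc_at)
    then have "((\<lambda>t. h t * w t) has_real_derivative q x * v x) (at x)"
      using v unfolding solution_def by metis
    with r x have "((\<lambda>t. h t * u' t - h t * w t) has_real_derivative r x - q x * v x) (at x)"
      by (intro DERIV_diff) auto
    then show "((\<lambda>t. h t * (u' t - w t)) has_real_derivative r x - q x * v x) (at x)"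
      by (simp add: right_diff_distrib)
  qed
  moreover have "\<forall>x\<in>{0<..<1}. r x - q x * v x \<le> q x * (u x - v x)"
    using r by (auto simp: right_diff_distrib)
  ultimately have nonneg: "\<forall>x\<in>{0..1}. u x - v x \<ge> 0"
    using max_principle[OF h_pos q_pos d'] assms(3,4) by auto
  then show "\<forall>x\<in>{0..1}. v x \<le> u x" by auto
  show "w 0 \<le> u' 0" if "v 0 = u 0"
  proof -
    have "u' 0 - w 0 \<ge> 0"
      by (rule left_endpoint_min_imp_deriv_nonneg[of 0 1 "\<lambda>x. u x - v x"])
        (use d' nonneg that in auto)
    then show ?thesis by simp
  qed
  show "u' 1 \<le> w 1" if "v 1 = u 1"
  proof -
    have "u' 1 - w 1 \<le> 0"
      by (rule right_endpoint_min_imp_deriv_nonpos[of 0 1 "\<lambda>x. u x - v x"])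
        (use d' nonneg that in auto)
    then show ?thesis by simp
  qed
qed

lemma subsolution_le_solution:
  assumes v: "solution v w" and u: "subsolution u u'" and "u 0 \<le> v 0" "u 1 \<le> v 1"
  shows "\<forall>x\<in>{0..1}. u x \<le> v x"
    and "u 0 = v 0 \<Longrightarrow> u' 0 \<le> w 0" and "u 1 = v 1 \<Longrightarrow> w 1 \<le> u' 1"
proof -
  have "- v 0 \<le> - u 0" "- v 1 \<le> - u 1" using assms(3,4) by simp_all
  note neg = solution_le_supersolution[OF solution_uminus[OF v] u[unfolded subsolution_def] this]
  show "\<forall>x\<in>{0..1}. u x \<le> v x" using neg(1) by simp
  show "u' 0 \<le> w 0" if "u 0 = v 0" using neg(2) that by simp
  show "w 1 \<le> u' 1" if "u 1 = v 1" using neg(3) that by simp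
qed

lemma supersolution_exp_barrier:
  assumes "\<forall>x\<in>{0..1}. \<alpha> * exp_defect a x \<le> 0" "\<forall>x\<in>{0..1}. \<beta> * exp_defect b x \<le> 0" "\<gamma> \<ge> 0"
  shows "supersolution (exp_barrier \<alpha> a \<beta> b \<gamma>) (exp_barrier' \<alpha> a \<beta> b)"
  unfolding supersolution_def
proof (intro conjI ballI exI)
  fix x :: real assume x: "x \<in> {0<..<1}"
  show "((\<lambda>t. h t * exp_barrier' \<alpha> a \<beta> b t) has_real_derivative
      \<alpha> * exp_defect a x * exp (a * x) + \<beta> * exp_defect b x * exp (b * x)
      + q x * (exp_barrier \<alpha> a \<beta> b \<gamma> x - \<gamma>)) (at x)"
  proof -
    have "((\<lambda>t. h t * exp_barrier' \<alpha> a \<beta> b t) has_real_derivative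
        h' x * exp_barrier' \<alpha> a \<beta> b x
        + h x * (\<alpha> * a * (a * exp (a * x)) + \<beta> * b * (b * exp (b * x)))) (at x)"
      using h_deriv x unfolding exp_barrier'_def by (auto intro!: derivative_eq_intros)
    then show ?thesis
      unfolding exp_barrier'_def exp_barrier_def exp_defect_def
      by (simp add: algebra_simps power2_eq_square)
  qed
  have "\<alpha> * exp_defect a x * exp (a * x) \<le> 0" "\<beta> * exp_defect b x * exp (b * x) \<le> 0"
    using assms(1,2) x by (auto intro: mult_nonpos_nonneg)
  moreover have "q x > 0" using q_pos x by simp
  then have "q x * \<gamma> \<ge> 0" using assms(3) by simp
  ultimately show "\<alpha> * exp_defect a x * exp (a * x) + \<beta> * exp_defect b x * exp (b * x)
      + q x * (exp_barrier \<alpha> a \<beta> b \<gamma> x - \<gamma>) \<le> q x * exp_barrier \<alpha> a \<beta> b \<gamma> x"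
    by (simp add: right_diff_distrib)
qed (auto intro: has_field_derivative_at_within exp_barrier_has_derivative)

lemma subsolution_exp_barrier:
  assumes "\<forall>x\<in>{0..1}. \<alpha> * exp_defect a x \<ge> 0" "\<forall>x\<in>{0..1}. \<beta> * exp_defect b x \<ge> 0" "\<gamma> \<le> 0"
  shows "subsolution (exp_barrier \<alpha> a \<beta> b \<gamma>) (exp_barrier' \<alpha> a \<beta> b)"
proof -
  have "supersolution (exp_barrier (- \<alpha>) a (- \<beta>) b (- \<gamma>)) (exp_barrier' (- \<alpha>) a (- \<beta>) b)"
    using assms by (intro supersolution_exp_barrier) auto
  moreover have "(\<lambda>x. - exp_barrier \<alpha> a \<beta> b \<gamma> x) = exp_barrier (- \<alpha>) a (- \<beta>) b (- \<gamma>)"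
    "(\<lambda>x. - exp_barrier' \<alpha> a \<beta> b x) = exp_barrier' (- \<alpha>) a (- \<beta>) b"
    by (simp_all add: fun_eq_iff exp_barrier_def exp_barrier'_def)
  ultimately show ?thesis unfolding subsolution_def by simp
qed

lemma solution_zero_boundary_slopes:
  assumes v: "solution v w" and "v 0 = 0" "v 1 = 0"
  shows "w 0 = 0" "w 1 = 0"
proof -
  have zero: "exp_barrier 0 0 0 0 0 x = 0" "exp_barrier' 0 0 0 0 x = 0" for x
    by (simp_all add: exp_barrier_def exp_barrier'_def)
  have "supersolution (exp_barrier 0 0 0 0 0) (exp_barrier' 0 0 0 0)"
    by (rule supersolution_exp_barrier) auto
  from solution_le_supersolution(2,3)[OF v this] have "w 0 \<le> 0" "0 \<le> w 1"
    using assms(2,3) zero by simp_all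
  moreover have "subsolution (exp_barrier 0 0 0 0 0) (exp_barrier' 0 0 0 0)"
    by (rule subsolution_exp_barrier) auto
  from subsolution_le_solution(2,3)[OF v this] have "0 \<le> w 0" "w 1 \<le> 0"
    using assms(2,3) zero by simp_all
  ultimately show "w 0 = 0" "w 1 = 0" by linarith+
qed

lemma solution_boundary_slopes_unique:
  assumes "solution v1 w1" "solution v2 w2" "v1 0 = v2 0" "v1 1 = v2 1"
  shows "w1 0 = w2 0" "w1 1 = w2 1"
  using solution_zero_boundary_slopes[OF solution_lincomb[OF assms(1,2), of 1 "-1"]] assms(3,4)
  by auto

lemma sturm_liouville_reflect:
  "sturm_liouville (\<lambda>x. h (1 - x)) (\<lambda>x. - h' (1 - x)) (\<lambda>x. q (1 - x))"
proof
  show "\<forall>x\<in>{0..1}. h (1 - x) > 0" "\<forall>x\<in>{0..1}. q (1 - x) > 0"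
    using h_pos q_pos by auto
  show "\<forall>x\<in>{0..1}. ((\<lambda>x. h (1 - x)) has_real_derivative - h' (1 - x)) (at x)"
  proof
    fix x :: real assume "x \<in> {0..1}"
    then have "(h has_real_derivative h' (1 - x)) (at (1 - x))" using h_deriv by simp
    moreover have "((\<lambda>x. 1 - x) has_real_derivative - 1) (at x)"
      by (auto intro!: derivative_eq_intros)
    ultimately show "((\<lambda>x. h (1 - x)) has_real_derivative - h' (1 - x)) (at x)"
      using DERIV_chain2[where f = h and g = "\<lambda>x. 1 - x"] by fastforce
  qed
qed

lemma solution_reflect:
  assumes "solution v w"
  shows "sturm_liouville.solution (\<lambda>x. h (1 - x)) (\<lambda>x. q (1 - x))
    (\<lambda>x. v (1 - x)) (\<lambda>x. - w (1 - x))"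
  unfolding sturm_liouville.solution_def[OF sturm_liouville_reflect]
proof
  fix x :: real assume "x \<in> {0..1}"
  then have "1 - x \<in> {0..1}" by simp
  with assms have v': "(v has_real_derivative w (1 - x)) (at (1 - x) within {0..1})"
    and flux: "((\<lambda>t. h t * w t) has_real_derivative q (1 - x) * v (1 - x))
      (at (1 - x) within {0..1})"
    unfolding solution_def by blast+
  have "((\<lambda>t. - (h (1 - t) * w (1 - t))) has_real_derivative - (- (q (1 - x) * v (1 - x))))
      (at x within {0..1})"
    using has_real_derivative_reflect_unit[OF flux] by (rule DERIV_minus)
  then show "((\<lambda>t. v (1 - t)) has_real_derivative - w (1 - x)) (at x within {0..1}) \<and>
      ((\<lambda>t. h (1 - t) * - w (1 - t)) has_real_derivative q (1 - x) * v (1 - x))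
        (at x within {0..1})"
    using has_real_derivative_reflect_unit[OF v'] by simp
qed

text \<open>Each barrier below touches \<open>v\<close> at an endpoint, where the comparison principle then
  orders the slopes.\<close>

lemma boundary_slopes_bounds_left:
  assumes v: "solution v w" "v 0 = 1" "v 1 = 0" and "0 < a" "0 < b"
    and sub: "\<forall>x\<in>{0..1}. exp_defect a x \<ge> 0 \<and> exp_defect (- a) x \<ge> 0"
    and sup: "\<forall>x\<in>{0..1}. exp_defect b x \<le> 0 \<and> exp_defect (- b) x \<le> 0"
  shows "- w 0 \<in> {b .. a / (1 - exp (- a))}"
    and "w 1 \<in> {- ((a + b) * exp (- b) / (1 - exp (- a - b))) .. 0}"
proof -
  define E where "E = exp (- a)"
  define F where "F = exp (- a - b)"
  have E: "0 < E" "E < 1" and F: "0 < F" "F < 1"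
    using \<open>0 < a\<close> \<open>0 < b\<close> by (auto simp: E_def F_def)
  have lower: "- w 0 \<le> a / (1 - E) \<and> w 1 \<le> 0"
  proof -
    define u where "u = exp_barrier (1 / (1 - E)) (- a) 0 0 (- E / (1 - E))"
    define u' where "u' = exp_barrier' (1 / (1 - E)) (- a) 0 0"
    have "subsolution u u'"
      unfolding u_def u'_def using sub E by (intro subsolution_exp_barrier) auto
    moreover have "u 0 = 1" "u 1 = 0"
      using E by (simp_all add: u_def exp_barrier_def E_def divide_simps)
    ultimately have "u' 0 \<le> w 0" "w 1 \<le> u' 1"
      using subsolution_le_solution(2,3)[OF v(1)] v(2,3) by simp_all
    moreover have "u' 0 = - a / (1 - E)" "u' 1 \<le> 0"
      using E \<open>0 < a\<close> by (simp_all add: u'_def exp_barrier'_def E_def divide_nonpos_pos)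
    ultimately show ?thesis by simp
  qed
  have upper_left: "w 0 \<le> - b"
  proof -
    define u where "u = exp_barrier 1 (- b) 0 0 0"
    define u' where "u' = exp_barrier' 1 (- b) 0 0"
    have "supersolution u u'"
      unfolding u_def u'_def using sup by (intro supersolution_exp_barrier) auto
    moreover have "u 0 = 1" "u 1 \<ge> 0"
      by (simp_all add: u_def exp_barrier_def)
    ultimately have "w 0 \<le> u' 0"
      using solution_le_supersolution(2)[OF v(1)] v(2,3) by simp
    then show ?thesis by (simp add: u'_def exp_barrier'_def)
  qed
  have upper_right: "- ((a + b) * exp (- b) / (1 - F)) \<le> w 1"
  proof -
    define u where "u = exp_barrier (1 / (1 - F)) (- b) (- F / (1 - F)) a 0"
    define u' where "u' = exp_barrier' (1 / (1 - F)) (- b) (- F / (1 - F)) a"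
    have "supersolution u u'"
      unfolding u_def u'_def using sub sup F
      by (intro supersolution_exp_barrier) (auto simp: divide_simps mult_nonpos_nonneg)
    moreover have "u 0 = 1" "u 1 = 0"
      using F by (simp_all add: u_def exp_barrier_def F_def divide_simps flip: exp_add)
    ultimately have "u' 1 \<le> w 1"
      using solution_le_supersolution(3)[OF v(1)] v(2,3) by simp
    moreover have "u' 1 = - ((a + b) * exp (- b) / (1 - F))"
    proof -
      have "u' 1 = (- b * exp (- b) - a * (F * exp a)) / (1 - F)"
        unfolding u'_def exp_barrier'_def
        by (simp add: diff_divide_distrib add_divide_distrib algebra_simps)
      also have "F * exp a = exp (- b)" by (simp add: F_def flip: exp_add)
      finally show ?thesis by (simp add: minus_divide_left algebra_simps)
    qed
    ultimately show ?thesis by simp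
  qed
  show "- w 0 \<in> {b .. a / (1 - exp (- a))}"
    and "w 1 \<in> {- ((a + b) * exp (- b) / (1 - exp (- a - b))) .. 0}"
    using lower upper_left upper_right by (auto simp: E_def F_def)
qed

lemma boundary_slopes_bounds_right:
  assumes v: "solution v w" "v 0 = 0" "v 1 = 1" and "0 < a" "0 < b"
    and sub: "\<forall>x\<in>{0..1}. exp_defect a x \<ge> 0 \<and> exp_defect (- a) x \<ge> 0"
    and sup: "\<forall>x\<in>{0..1}. exp_defect b x \<le> 0 \<and> exp_defect (- b) x \<le> 0"
  shows "w 1 \<in> {b .. a / (1 - exp (- a))}"
    and "- w 0 \<in> {- ((a + b) * exp (- b) / (1 - exp (- a - b))) .. 0}"
proof -
  interpret reflected: sturm_liouville "\<lambda>x. h (1 - x)" "\<lambda>x. - h' (1 - x)" "\<lambda>x. q (1 - x)"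
    by (rule sturm_liouville_reflect)
  have defect: "reflected.exp_defect c x = exp_defect (- c) (1 - x)" for c x
    by (simp add: reflected.exp_defect_def exp_defect_def)
  have "\<forall>x\<in>{0..1}. reflected.exp_defect a x \<ge> 0 \<and> reflected.exp_defect (- a) x \<ge> 0"
    "\<forall>x\<in>{0..1}. reflected.exp_defect b x \<le> 0 \<and> reflected.exp_defect (- b) x \<le> 0"
    using sub sup by (auto simp: defect)
  from reflected.boundary_slopes_bounds_left[OF solution_reflect[OF v(1)] _ _ \<open>0 < a\<close> \<open>0 < b\<close> this]
  show "w 1 \<in> {b .. a / (1 - exp (- a))}"
    and "- w 0 \<in> {- ((a + b) * exp (- b) / (1 - exp (- a - b))) .. 0}"
    using v(2,3) by simp_all
qed

lemma solution_exists:
  assumes "continuous_on {0..1} q"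
  obtains v w where "solution v w" "v 0 = a" "v 1 = b"
proof -
  have "continuous_on {0..1} h"
  proof (rule DERIV_continuous_on)
    show "(h has_real_derivative h' x) (at x within {0..1})" if "x \<in> {0..1}" for x
      using h_deriv that by (simp add: has_field_derivative_at_within)
  qed
  then have inv_h: "continuous_on {0..1} (\<lambda>x. 1 / h x)"
    using h_pos by (intro continuous_intros) auto
  have solution_of_ivp: "solution V (\<lambda>x. P x / h x)"
    if "\<forall>x\<in>{0..1}. (V has_real_derivative 1 / h x * P x) (at x within {0..1}) \<and>
       (P has_real_derivative q x * V x) (at x within {0..1})" for V P
    unfolding solution_def
  proof
    fix x :: real assume x: "x \<in> {0..1}"
    have "(P has_real_derivative q x * V x) (at x within {0..1})" using that x by blast
    then have "((\<lambda>t. h t * (P t / h t)) has_real_derivative q x * V x) (at x within {0..1})"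
    proof (rule has_field_derivative_transform_within[where d = 1])
      show "P t = h t * (P t / h t)" if "t \<in> {0..1}" for t
        using h_pos that by (simp add: less_imp_neq[symmetric])
    qed (use x in simp_all)
    then show "(V has_real_derivative P x / h x) (at x within {0..1}) \<and>
        ((\<lambda>t. h t * (P t / h t)) has_real_derivative q x * V x) (at x within {0..1})"
      using that x by simp
  qed
  obtain V1 P1 where "V1 0 = 1" and ivp1: "\<forall>x\<in>{0..1}.
      (V1 has_real_derivative 1 / h x * P1 x) (at x within {0..1}) \<and>
      (P1 has_real_derivative q x * V1 x) (at x within {0..1})"
    by (rule linear_ivp_exists[OF inv_h assms, of 1 0])
  obtain V2 P2 where "V2 0 = 0" "P2 0 = 1" and ivp2: "\<forall>x\<in>{0..1}.
      (V2 has_real_derivative 1 / h x * P2 x) (at x within {0..1}) \<and>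
      (P2 has_real_derivative q x * V2 x) (at x within {0..1})"
    by (rule linear_ivp_exists[OF inv_h assms, of 0 1])
  note s1 = solution_of_ivp[OF ivp1] and s2 = solution_of_ivp[OF ivp2]
  have "V2 1 \<noteq> 0"
  proof
    assume "V2 1 = 0"
    with solution_zero_boundary_slopes(1)[OF s2 \<open>V2 0 = 0\<close>] have "P2 0 / h 0 = 0" by simp
    with \<open>P2 0 = 1\<close> bspec[OF h_pos, of 0] show False by simp
  qed
  define c where "c = (b - a * V1 1) / V2 1"
  have "solution (\<lambda>x. a * V1 x + c * V2 x) (\<lambda>x. a * (P1 x / h x) + c * (P2 x / h x))"
    by (rule solution_lincomb[OF s1 s2])
  moreover have "a * V1 0 + c * V2 0 = a" "a * V1 1 + c * V2 1 = b"
    using \<open>V1 0 = 1\<close> \<open>V2 0 = 0\<close> \<open>V2 1 \<noteq> 0\<close> by (simp_all add: c_def)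
  ultimately show thesis using that by blast
qed

end

section \<open>The radial problem\<close>

lemma smooth_fun_has_derivative: "smooth_fun f \<Longrightarrow> (f has_real_derivative deriv f x) (at x)"
  unfolding smooth_fun_def by (drule spec[of _ 0]) simp

lemma smooth_fun_continuous_on: "smooth_fun f \<Longrightarrow> continuous_on S f"
  by (rule DERIV_continuous_on, rule has_field_derivative_at_within,
      erule smooth_fun_has_derivative)

lemma smooth_fun_deriv_has_derivative:
  "smooth_fun f \<Longrightarrow> (deriv f has_real_derivative deriv (deriv f) x) (at x)"
  unfolding smooth_fun_def by (drule spec[of _ 1]) simp

lemma smooth_fun_deriv_continuous_on: "smooth_fun f \<Longrightarrow> continuous_on S (deriv f)"
  by (rule DERIV_continuous_on, rule has_field_derivative_at_within,
      erule smooth_fun_deriv_has_derivative)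

lemma smooth_fun_powr_continuous_on:
  assumes "smooth_fun f" "\<forall>x\<in>S. f x > 0"
  shows "continuous_on S (\<lambda>x. f x powr r)"
proof (rule continuous_on_powr)
  show "continuous_on S f" by (rule smooth_fun_continuous_on[OF assms(1)])
  show "\<forall>x\<in>S. f x \<noteq> 0" using assms(2) by force
qed (rule continuous_on_const)

definition radial_coeff :: "(real \<Rightarrow> real) \<Rightarrow> nat \<Rightarrow> real \<Rightarrow> real" where
  "radial_coeff f n x = f x powr ((real n - 2) / 2)"

definition radial_coeff' :: "(real \<Rightarrow> real) \<Rightarrow> nat \<Rightarrow> real \<Rightarrow> real" where
  "radial_coeff' f n x = (real n - 2) / 2 * f x powr ((real n - 2) / 2 - 1) * deriv f x"

definition radial_potential :: "(real \<Rightarrow> real) \<Rightarrow> nat \<Rightarrow> real \<Rightarrow> real \<Rightarrow> real \<Rightarrow> real" where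
  "radial_potential f n mu lam x = f x powr ((real n - 2) / 2) * mu - lam * f x powr (real n / 2)"

lemma radial_coeff_has_derivative:
  assumes "smooth_fun f" "f x > 0"
  shows "(radial_coeff f n has_real_derivative radial_coeff' f n x) (at x)"
proof -
  have "((\<lambda>x. (\<lambda>z. z powr ((real n - 2) / 2)) (f x)) has_real_derivative
      (real n - 2) / 2 * f x powr ((real n - 2) / 2 - 1) * deriv f x) (at x)"
    by (rule DERIV_chain2[OF has_real_derivative_powr[OF assms(2)]
          smooth_fun_has_derivative[OF assms(1)]])
  then show ?thesis unfolding radial_coeff_def radial_coeff'_def by simp
qed

lemma radial_coeff'_continuous_on:
  assumes "smooth_fun f" "\<forall>x\<in>{0..1}. f x > 0"
  shows "continuous_on {0..1} (radial_coeff' f n)"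
  unfolding radial_coeff'_def
  by (intro continuous_on_mult continuous_on_const smooth_fun_powr_continuous_on[OF assms]
      smooth_fun_deriv_continuous_on[OF assms(1)])

lemma radial_potential_continuous_on:
  assumes "smooth_fun f" "\<forall>x\<in>{0..1}. f x > 0"
  shows "continuous_on {0..1} (radial_potential f n mu lam)"
  unfolding radial_potential_def
  by (intro continuous_on_mult continuous_on_const continuous_on_diff
      smooth_fun_powr_continuous_on[OF assms])

lemma radial_sturm_liouville:
  assumes "smooth_fun f" "\<forall>x\<in>{0..1}. f x > 0" "\<forall>x\<in>{0..1}. radial_potential f n mu lam x > 0"
  shows "sturm_liouville (radial_coeff f n) (radial_coeff' f n) (radial_potential f n mu lam)"
proof
  show "\<forall>x\<in>{0..1}. radial_coeff f n x > 0"
    using assms(2) by (force simp: radial_coeff_def)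
  show "\<forall>x\<in>{0..1}. (radial_coeff f n has_real_derivative radial_coeff' f n x) (at x)"
    using assms(1,2) by (simp add: radial_coeff_has_derivative)
qed (fact assms(3))

lemma radial_bvp_sol_iff:
  assumes "sturm_liouville (radial_coeff f n) h' (radial_potential f n mu lam)"
  shows "radial_bvp_sol f n mu lam a b v w \<longleftrightarrow>
    sturm_liouville.solution (radial_coeff f n) (radial_potential f n mu lam) v w
      \<and> v 0 = a \<and> v 1 = b"
  unfolding radial_bvp_sol_def sturm_liouville.solution_def[OF assms]
  by (auto simp: radial_coeff_def radial_potential_def)

lemma dn_mode_eq:
  assumes f: "smooth_fun f" "\<forall>x\<in>{0..1}. f x > 0"
    and q: "\<forall>x\<in>{0..1}. radial_potential f n mu lam x > 0"
    and v: "sturm_liouville.solution (radial_coeff f n) (radial_potential f n mu lam) v w"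
      "v 0 = a" "v 1 = b"
  shows "dn_mode f n mu lam a b = (- w 0 / sqrt (f 0), w 1 / sqrt (f 1))"
proof -
  have sl: "sturm_liouville (radial_coeff f n) (radial_coeff' f n) (radial_potential f n mu lam)"
    using f q by (rule radial_sturm_liouville)
  interpret sturm_liouville "radial_coeff f n" "radial_coeff' f n" "radial_potential f n mu lam"
    by (fact sl)
  show ?thesis
    unfolding dn_mode_def radial_bvp_sol_iff[OF sl]
  proof (rule the_equality)
    show "\<exists>v' w'. (solution v' w' \<and> v' 0 = a \<and> v' 1 = b) \<and>
        (- w 0 / sqrt (f 0), w 1 / sqrt (f 1)) = (- w' 0 / sqrt (f 0), w' 1 / sqrt (f 1))"
      using v by blast
  next
    fix pq assume "\<exists>v' w'. (solution v' w' \<and> v' 0 = a \<and> v' 1 = b) \<and>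
        pq = (- w' 0 / sqrt (f 0), w' 1 / sqrt (f 1))"
    then obtain v' w' where "solution v' w'" "v' 0 = a" "v' 1 = b"
      "pq = (- w' 0 / sqrt (f 0), w' 1 / sqrt (f 1))" by blast
    then show "pq = (- w 0 / sqrt (f 0), w 1 / sqrt (f 1))"
      using solution_boundary_slopes_unique[OF v(1)] v(2,3) by auto
  qed
qed
section \<open>High-frequency asymptotics of the Dirichlet-to-Neumann matrix\<close>

text \<open>Pointwise form of the defect of \<open>e\<^sup>c\<^sup>x\<close> for the potential \<open>h s\<^sup>2 - L\<close>: the rate
  \<open>s (1 + d)\<close> gives a subsolution and \<open>s (1 - d)\<close> a supersolution once \<open>s d\<close> dominates
  \<open>|h'|\<close> and \<open>|L|\<close>.\<close>

lemma exp_defect_sign_estimates: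
  fixes hx h'x L s d hmin H R c :: real
  assumes hmin: "0 < hmin" "hmin \<le> hx" and H: "\<bar>h'x\<bar> \<le> H" and R: "\<bar>L\<bar> \<le> R"
    and s: "1 \<le> s" and d: "0 < d" "d < 1" and large: "2 * H + R + 1 \<le> s * d * hmin"
  shows "0 < hx * s\<^sup>2 - L"
    and "\<bar>c\<bar> = s * (1 + d) \<Longrightarrow> 0 \<le> hx * c\<^sup>2 + h'x * c - (hx * s\<^sup>2 - L)"
    and "\<bar>c\<bar> = s * (1 - d) \<Longrightarrow> hx * c\<^sup>2 + h'x * c - (hx * s\<^sup>2 - L) \<le> 0"
proof -
  define X where "X = hx * s\<^sup>2"
  have "0 \<le> H" "0 \<le> R" "- R \<le> L" "L \<le> R" using H R by (auto simp: abs_le_iff)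
  have "0 \<le> X" using hmin by (simp add: X_def)
  have "2 * H * s + R + 1 \<le> s * (2 * H + R + 1)"
    using s \<open>0 \<le> R\<close> mult_left_mono[of 1 s "R + 1"] by (simp add: algebra_simps)
  also have "\<dots> \<le> s * (s * d * hmin)" using large s by (intro mult_left_mono) auto
  also have "\<dots> \<le> X * d"
    using hmin d mult_right_mono[of hmin hx "s\<^sup>2 * d"]
    by (simp add: X_def power2_eq_square ac_simps)
  finally have key: "2 * H * s + R + 1 \<le> X * d" .
  have "X * d \<le> X" "0 \<le> X * d\<^sup>2" "X * d\<^sup>2 \<le> X * d"
    using \<open>0 \<le> X\<close> d by (simp_all add: mult_left_le power2_eq_square mult_left_mono)
  have "0 \<le> H * s * d" "H * s * d \<le> H * s"
    using \<open>0 \<le> H\<close> s d by (simp_all add: mult_left_le)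
  have h'c: "\<bar>h'x * c\<bar> \<le> H * \<bar>c\<bar>" using H by (simp add: abs_mult mult_right_mono)
  have c_sq: "hx * c\<^sup>2 = X * (1 + e)\<^sup>2" if "\<bar>c\<bar> = s * (1 + e)" for e
  proof -
    have "c\<^sup>2 = s\<^sup>2 * (1 + e)\<^sup>2" using that by (metis power2_abs power_mult_distrib)
    then show ?thesis by (simp add: X_def)
  qed
  have "0 \<le> H * s" using \<open>0 \<le> H\<close> s by simp
  show "0 < hx * s\<^sup>2 - L" using key \<open>X * d \<le> X\<close> \<open>L \<le> R\<close> \<open>0 \<le> H * s\<close>
    unfolding X_def[symmetric] by linarith
  show "0 \<le> hx * c\<^sup>2 + h'x * c - (hx * s\<^sup>2 - L)" if c: "\<bar>c\<bar> = s * (1 + d)"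
  proof -
    have "hx * c\<^sup>2 = X + 2 * (X * d) + X * d\<^sup>2"
      using c_sq[OF c] by (simp add: power2_eq_square algebra_simps)
    moreover have "- (h'x * c) \<le> H * s + H * s * d"
      using h'c c by (simp add: algebra_simps)
    ultimately show ?thesis
      using key \<open>- R \<le> L\<close> \<open>0 \<le> R\<close> \<open>0 \<le> H * s\<close> \<open>0 \<le> X * d\<^sup>2\<close> \<open>H * s * d \<le> H * s\<close>
      unfolding X_def[symmetric] by linarith
  qed
  show "hx * c\<^sup>2 + h'x * c - (hx * s\<^sup>2 - L) \<le> 0" if c: "\<bar>c\<bar> = s * (1 - d)"
  proof -
    have "hx * c\<^sup>2 = X - 2 * (X * d) + X * d\<^sup>2"
      using c_sq[of "- d"] c by (simp add: power2_eq_square algebra_simps)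
    moreover have "h'x * c \<le> H * s - H * s * d"
      using h'c c by (simp add: algebra_simps)
    ultimately show ?thesis
      using key \<open>L \<le> R\<close> \<open>0 \<le> H * s\<close> \<open>X * d\<^sup>2 \<le> X * d\<close> \<open>0 \<le> H * s * d\<close>
      unfolding X_def[symmetric] by linarith
  qed
qed

lemma radial_dn_mode_bounds:
  fixes f :: "real \<Rightarrow> real" and s d hmin H R :: real
  assumes f: "smooth_fun f" "\<forall>x\<in>{0..1}. f x > 0"
    and hmin: "0 < hmin" "\<forall>x\<in>{0..1}. hmin \<le> radial_coeff f n x"
    and H: "\<forall>x\<in>{0..1}. \<bar>radial_coeff' f n x\<bar> \<le> H"
    and R: "\<forall>x\<in>{0..1}. \<bar>lam * f x powr (real n / 2)\<bar> \<le> R"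
    and s: "1 \<le> s" and d: "0 < d" "d < 1" and large: "2 * H + R + 1 \<le> s * d * hmin"
  defines "a \<equiv> s * (1 + d)" and "b \<equiv> s * (1 - d)"
  shows "sqrt (f 0) * fst (dn_mode f n (s\<^sup>2) lam 1 0) \<in> {b .. a / (1 - exp (- a))}"
    and "sqrt (f 1) * snd (dn_mode f n (s\<^sup>2) lam 0 1) \<in> {b .. a / (1 - exp (- a))}"
    and "sqrt (f 1) * snd (dn_mode f n (s\<^sup>2) lam 1 0)
      \<in> {- ((a + b) * exp (- b) / (1 - exp (- a - b))) .. 0}"
    and "sqrt (f 0) * fst (dn_mode f n (s\<^sup>2) lam 0 1)
      \<in> {- ((a + b) * exp (- b) / (1 - exp (- a - b))) .. 0}"
proof -
  have potential: "radial_potential f n (s\<^sup>2) lam x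
      = radial_coeff f n x * s\<^sup>2 - lam * f x powr (real n / 2)" for x
    by (simp add: radial_potential_def radial_coeff_def)
  have estimates: "0 < radial_coeff f n x * s\<^sup>2 - lam * f x powr (real n / 2)"
    "\<bar>c\<bar> = s * (1 + d) \<Longrightarrow> 0 \<le> radial_coeff f n x * c\<^sup>2 + radial_coeff' f n x * c
      - (radial_coeff f n x * s\<^sup>2 - lam * f x powr (real n / 2))"
    "\<bar>c\<bar> = s * (1 - d) \<Longrightarrow> radial_coeff f n x * c\<^sup>2 + radial_coeff' f n x * c
      - (radial_coeff f n x * s\<^sup>2 - lam * f x powr (real n / 2)) \<le> 0"
    if "x \<in> {0..1}" for x c
    using exp_defect_sign_estimates[OF hmin(1) bspec[OF hmin(2) that] bspec[OF H that]
        bspec[OF R that] s d large]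
    by simp_all
  have q_pos: "\<forall>x\<in>{0..1}. radial_potential f n (s\<^sup>2) lam x > 0"
    using estimates(1) by (simp add: potential)
  interpret sturm_liouville "radial_coeff f n" "radial_coeff' f n" "radial_potential f n (s\<^sup>2) lam"
    using f q_pos by (rule radial_sturm_liouville)
  have "0 < a" "0 < b" using s d by (simp_all add: a_def b_def)
  have "\<forall>x\<in>{0..1}. exp_defect a x \<ge> 0 \<and> exp_defect (- a) x \<ge> 0"
    using estimates(2)[of _ a] estimates(2)[of _ "- a"] \<open>0 < a\<close>
    by (simp add: exp_defect_def potential a_def)
  moreover have "\<forall>x\<in>{0..1}. exp_defect b x \<le> 0 \<and> exp_defect (- b) x \<le> 0"
    using estimates(3)[of _ b] estimates(3)[of _ "- b"] \<open>0 < b\<close>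
    by (simp add: exp_defect_def potential b_def)
  moreover obtain v1 w1 where v1: "solution v1 w1" "v1 0 = 1" "v1 1 = 0"
    using solution_exists[OF radial_potential_continuous_on[OF f]] .
  moreover obtain v2 w2 where v2: "solution v2 w2" "v2 0 = 0" "v2 1 = 1"
    using solution_exists[OF radial_potential_continuous_on[OF f]] .
  moreover have "dn_mode f n (s\<^sup>2) lam 1 0 = (- w1 0 / sqrt (f 0), w1 1 / sqrt (f 1))"
    "dn_mode f n (s\<^sup>2) lam 0 1 = (- w2 0 / sqrt (f 0), w2 1 / sqrt (f 1))"
    using dn_mode_eq[OF f q_pos] v1 v2 by blast+
  moreover have "sqrt (f 0) > 0" "sqrt (f 1) > 0" using f(2) by simp_all
  ultimately show "sqrt (f 0) * fst (dn_mode f n (s\<^sup>2) lam 1 0) \<in> {b .. a / (1 - exp (- a))}"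
    and "sqrt (f 1) * snd (dn_mode f n (s\<^sup>2) lam 0 1) \<in> {b .. a / (1 - exp (- a))}"
    and "sqrt (f 1) * snd (dn_mode f n (s\<^sup>2) lam 1 0)
      \<in> {- ((a + b) * exp (- b) / (1 - exp (- a - b))) .. 0}"
    and "sqrt (f 0) * fst (dn_mode f n (s\<^sup>2) lam 0 1)
      \<in> {- ((a + b) * exp (- b) / (1 - exp (- a - b))) .. 0}"
    using boundary_slopes_bounds_left[OF v1 \<open>0 < a\<close> \<open>0 < b\<close>]
      boundary_slopes_bounds_right[OF v2 \<open>0 < a\<close> \<open>0 < b\<close>]
    by simp_all
qed

text \<open>The rates \<open>\<surd>\<mu> (1 \<plusminus> \<mu>\<^sup>-\<^sup>1\<^sup>/\<^sup>4)\<close> are admissible in the previous lemma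
  for large \<open>\<mu>\<close>, because \<open>\<surd>\<mu> \<mu>\<^sup>-\<^sup>1\<^sup>/\<^sup>4 \<rightarrow> \<infinity>\<close>, and their ratio to \<open>\<surd>\<mu>\<close> tends to \<open>1\<close>.\<close>

lemma eventually_admissible_rate:
  fixes C :: real
  shows "eventually (\<lambda>\<mu>. 0 < \<mu> \<and> 1 \<le> sqrt \<mu> \<and> 0 < \<mu> powr (- 1 / 4) \<and> \<mu> powr (- 1 / 4) < 1 \<and>
    C \<le> sqrt \<mu> * \<mu> powr (- 1 / 4)) at_top"
proof -
  have "filterlim (\<lambda>\<mu>::real. sqrt \<mu> * \<mu> powr (- 1 / 4)) at_top at_top" by real_asymp
  then have "eventually (\<lambda>\<mu>. C \<le> sqrt \<mu> * \<mu> powr (- 1 / 4)) at_top"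
    by (simp add: filterlim_at_top)
  moreover have "eventually (\<lambda>\<mu>::real. 0 < \<mu>) at_top" by (rule eventually_gt_at_top)
  moreover have "eventually (\<lambda>\<mu>. 1 \<le> sqrt \<mu>) at_top" by real_asymp
  moreover have "eventually (\<lambda>\<mu>::real. 0 < \<mu> powr (- 1 / 4)) at_top" by real_asymp
  moreover have "eventually (\<lambda>\<mu>::real. \<mu> powr (- 1 / 4) < 1) at_top" by real_asymp
  ultimately show ?thesis by eventually_elim blast
qed

lemma admissible_rate_limits:
  "((\<lambda>\<mu>. sqrt \<mu> * (1 - \<mu> powr (- 1 / 4)) / sqrt \<mu>) \<longlongrightarrow> 1) at_top"
  "((\<lambda>\<mu>. sqrt \<mu> * (1 + \<mu> powr (- 1 / 4))
      / (1 - exp (- (sqrt \<mu> * (1 + \<mu> powr (- 1 / 4))))) / sqrt \<mu>) \<longlongrightarrow> 1) at_top"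
  "((\<lambda>\<mu>. - ((sqrt \<mu> * (1 + \<mu> powr (- 1 / 4)) + sqrt \<mu> * (1 - \<mu> powr (- 1 / 4)))
      * exp (- (sqrt \<mu> * (1 - \<mu> powr (- 1 / 4))))
      / (1 - exp (- (sqrt \<mu> * (1 + \<mu> powr (- 1 / 4))) - sqrt \<mu> * (1 - \<mu> powr (- 1 / 4)))))
      / sqrt \<mu>) \<longlongrightarrow> 0) at_top"
  by real_asymp+

lemma radial_dn_mode_asymptotics:
  fixes f :: "real \<Rightarrow> real"
  assumes f: "smooth_fun f" "\<forall>x\<in>{0..1}. f x > 0"
  shows "((\<lambda>\<mu>. sqrt (f 0) * fst (dn_mode f n \<mu> lam 1 0) / sqrt \<mu>) \<longlongrightarrow> 1) at_top"
    and "((\<lambda>\<mu>. sqrt (f 1) * snd (dn_mode f n \<mu> lam 0 1) / sqrt \<mu>) \<longlongrightarrow> 1) at_top"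
    and "((\<lambda>\<mu>. sqrt (f 1) * snd (dn_mode f n \<mu> lam 1 0) / sqrt \<mu>) \<longlongrightarrow> 0) at_top"
    and "((\<lambda>\<mu>. sqrt (f 0) * fst (dn_mode f n \<mu> lam 0 1) / sqrt \<mu>) \<longlongrightarrow> 0) at_top"
proof -
  have coeff_cont: "continuous_on {0..1} (radial_coeff f n)"
    unfolding radial_coeff_def by (rule smooth_fun_powr_continuous_on[OF f])
  obtain x0 where "x0 \<in> {0..1}" and x0: "\<forall>x\<in>{0..1}. radial_coeff f n x0 \<le> radial_coeff f n x"
    using continuous_attains_inf[OF compact_Icc _ coeff_cont] by auto
  have hmin: "0 < radial_coeff f n x0"
    using bspec[OF f(2) \<open>x0 \<in> {0..1}\<close>] by (simp add: radial_coeff_def)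
  obtain H where H: "\<forall>x\<in>{0..1}. \<bar>radial_coeff' f n x\<bar> \<le> H"
    using continuous_on_compact_bound[OF compact_Icc radial_coeff'_continuous_on[OF f]]
    by (metis real_norm_def)
  obtain R where R: "\<forall>x\<in>{0..1}. \<bar>lam * f x powr (real n / 2)\<bar> \<le> R"
    using continuous_on_compact_bound[OF compact_Icc
        continuous_on_mult_left[OF smooth_fun_powr_continuous_on[OF f]]]
    by (metis real_norm_def)
  define d where "d \<mu> = \<mu> powr (- 1 / 4)" for \<mu> :: real
  define a where "a \<mu> = sqrt \<mu> * (1 + d \<mu>)" for \<mu>
  define b where "b \<mu> = sqrt \<mu> * (1 - d \<mu>)" for \<mu>
  define off where "off \<mu> = - ((a \<mu> + b \<mu>) * exp (- b \<mu>) / (1 - exp (- a \<mu> - b \<mu>)))" for \<mu>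
  note rate = eventually_admissible_rate[of "(2 * H + R + 1) / radial_coeff f n x0", folded d_def]
  from rate have bounds: "eventually (\<lambda>\<mu>.
      (sqrt (f 0) * fst (dn_mode f n \<mu> lam 1 0) \<in> {b \<mu> .. a \<mu> / (1 - exp (- a \<mu>))} \<and> 0 < sqrt \<mu>) \<and>
      (sqrt (f 1) * snd (dn_mode f n \<mu> lam 0 1) \<in> {b \<mu> .. a \<mu> / (1 - exp (- a \<mu>))} \<and> 0 < sqrt \<mu>) \<and>
      (sqrt (f 1) * snd (dn_mode f n \<mu> lam 1 0) \<in> {off \<mu> .. 0} \<and> 0 < sqrt \<mu>) \<and>
      (sqrt (f 0) * fst (dn_mode f n \<mu> lam 0 1) \<in> {off \<mu> .. 0} \<and> 0 < sqrt \<mu>)) at_top"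
  proof (rule eventually_mono)
    fix \<mu> :: real
    assume \<mu>: "0 < \<mu> \<and> 1 \<le> sqrt \<mu> \<and> 0 < d \<mu> \<and> d \<mu> < 1 \<and>
      (2 * H + R + 1) / radial_coeff f n x0 \<le> sqrt \<mu> * d \<mu>"
    then have "2 * H + R + 1 \<le> sqrt \<mu> * d \<mu> * radial_coeff f n x0"
      using hmin by (simp add: pos_divide_le_eq)
    from radial_dn_mode_bounds[OF f hmin x0 H R _ _ _ this] \<mu>
    show "(sqrt (f 0) * fst (dn_mode f n \<mu> lam 1 0) \<in> {b \<mu> .. a \<mu> / (1 - exp (- a \<mu>))} \<and> 0 < sqrt \<mu>) \<and>
      (sqrt (f 1) * snd (dn_mode f n \<mu> lam 0 1) \<in> {b \<mu> .. a \<mu> / (1 - exp (- a \<mu>))} \<and> 0 < sqrt \<mu>) \<and>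
      (sqrt (f 1) * snd (dn_mode f n \<mu> lam 1 0) \<in> {off \<mu> .. 0} \<and> 0 < sqrt \<mu>) \<and>
      (sqrt (f 0) * fst (dn_mode f n \<mu> lam 0 1) \<in> {off \<mu> .. 0} \<and> 0 < sqrt \<mu>)"
      by (simp add: a_def b_def off_def)
  qed
  note limits = admissible_rate_limits[folded d_def, folded a_def b_def, folded off_def]
  note lower_diag = limits(1) and upper_diag = limits(2) and lower_off = limits(3)
  have upper_off: "((\<lambda>\<mu>. 0 / sqrt \<mu>) \<longlongrightarrow> 0) at_top" by simp
  show "((\<lambda>\<mu>. sqrt (f 0) * fst (dn_mode f n \<mu> lam 1 0) / sqrt \<mu>) \<longlongrightarrow> 1) at_top"
    by (rule tendsto_sandwich_divide[OF eventually_mono[OF bounds] lower_diag upper_diag]) blast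
  show "((\<lambda>\<mu>. sqrt (f 1) * snd (dn_mode f n \<mu> lam 0 1) / sqrt \<mu>) \<longlongrightarrow> 1) at_top"
    by (rule tendsto_sandwich_divide[OF eventually_mono[OF bounds] lower_diag upper_diag]) blast
  show "((\<lambda>\<mu>. sqrt (f 1) * snd (dn_mode f n \<mu> lam 1 0) / sqrt \<mu>) \<longlongrightarrow> 0) at_top"
    by (rule tendsto_sandwich_divide[OF eventually_mono[OF bounds] lower_off upper_off]) blast
  show "((\<lambda>\<mu>. sqrt (f 0) * fst (dn_mode f n \<mu> lam 0 1) / sqrt \<mu>) \<longlongrightarrow> 0) at_top"
    by (rule tendsto_sandwich_divide[OF eventually_mono[OF bounds] lower_off upper_off]) blast
qed

lemma dn_matrix_trace:
  "trace (dn_matrix f n mu lam) = fst (dn_mode f n mu lam 1 0) + snd (dn_mode f n mu lam 0 1)"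
  by (simp add: trace_def sum_2 dn_matrix_def)

lemma dn_matrix_det:
  "det (dn_matrix f n mu lam) = fst (dn_mode f n mu lam 1 0) * snd (dn_mode f n mu lam 0 1)
    - fst (dn_mode f n mu lam 0 1) * snd (dn_mode f n mu lam 1 0)"
  by (simp add: det_2 dn_matrix_def)

lemma dn_matrix_trace_det_limits:
  fixes f :: "real \<Rightarrow> real" and mu :: "nat \<Rightarrow> real"
  assumes f: "smooth_fun f" "\<forall>x\<in>{0..1}. f x > 0" and mu: "filterlim mu at_top sequentially"
  shows "((\<lambda>m. trace (dn_matrix f n (mu m) lam) / sqrt (mu m))
      \<longlongrightarrow> 1 / sqrt (f 0) + 1 / sqrt (f 1)) sequentially"
    and "((\<lambda>m. det (dn_matrix f n (mu m) lam) / mu m)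
      \<longlongrightarrow> 1 / sqrt (f 0) * (1 / sqrt (f 1))) sequentially"
proof -
  have "sqrt (f 0) \<noteq> 0" "sqrt (f 1) \<noteq> 0"
    using bspec[OF f(2), of 0] bspec[OF f(2), of 1] by auto
  define A where "A = (\<lambda>m. fst (dn_mode f n (mu m) lam 1 0) / sqrt (mu m))"
  define B where "B = (\<lambda>m. fst (dn_mode f n (mu m) lam 0 1) / sqrt (mu m))"
  define C where "C = (\<lambda>m. snd (dn_mode f n (mu m) lam 1 0) / sqrt (mu m))"
  define D where "D = (\<lambda>m. snd (dn_mode f n (mu m) lam 0 1) / sqrt (mu m))"
  note asym = radial_dn_mode_asymptotics[OF f, of n lam]
  have "(A \<longlongrightarrow> 1 / sqrt (f 0)) sequentially" "(D \<longlongrightarrow> 1 / sqrt (f 1)) sequentially"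
    "(C \<longlongrightarrow> 0) sequentially" "(B \<longlongrightarrow> 0) sequentially"
    using tendsto_scaled_compose[OF asym(1) \<open>sqrt (f 0) \<noteq> 0\<close> mu]
      tendsto_scaled_compose[OF asym(2) \<open>sqrt (f 1) \<noteq> 0\<close> mu]
      tendsto_scaled_compose[OF asym(3) \<open>sqrt (f 1) \<noteq> 0\<close> mu]
      tendsto_scaled_compose[OF asym(4) \<open>sqrt (f 0) \<noteq> 0\<close> mu]
    by (simp_all add: A_def B_def C_def D_def)
  then have "((\<lambda>m. A m + D m) \<longlongrightarrow> 1 / sqrt (f 0) + 1 / sqrt (f 1)) sequentially"
    and "((\<lambda>m. A m * D m - B m * C m) \<longlongrightarrow> 1 / sqrt (f 0) * (1 / sqrt (f 1))) sequentially"
    by (auto intro: tendsto_eq_intros)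
  moreover have "A m + D m = trace (dn_matrix f n (mu m) lam) / sqrt (mu m)" for m
    by (simp add: A_def D_def dn_matrix_trace add_divide_distrib)
  moreover have "eventually (\<lambda>m. A m * D m - B m * C m = det (dn_matrix f n (mu m) lam) / mu m)
      sequentially"
    using mu unfolding filterlim_at_top_dense
    by (auto elim!: allE[of _ 0] eventually_mono simp: A_def B_def C_def D_def dn_matrix_det diff_divide_distrib)
  ultimately show "((\<lambda>m. trace (dn_matrix f n (mu m) lam) / sqrt (mu m))
      \<longlongrightarrow> 1 / sqrt (f 0) + 1 / sqrt (f 1)) sequentially"
    and "((\<lambda>m. det (dn_matrix f n (mu m) lam) / mu m)
      \<longlongrightarrow> 1 / sqrt (f 0) * (1 / sqrt (f 1))) sequentially"
    by (auto elim: Lim_transform_eventually)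
qed

theorem lemma3p3:
  fixes f ft :: "real \<Rightarrow> real" and n :: nat and mu :: "nat \<Rightarrow> real" and lam :: real
  assumes "n \<ge> 2"
    and "mu 0 = 0" and "0 < mu 1" and "mono mu" and "filterlim mu at_top sequentially"
    and "smooth_fun f" and "smooth_fun ft"
    and "\<forall>x\<in>{0..1}. f x > 0" and "\<forall>x\<in>{0..1}. ft x > 0"
    and "not_dirichlet_eigenvalue f n mu lam" and "not_dirichlet_eigenvalue ft n mu lam"
    and "\<forall>m. det (dn_matrix f n (mu m) lam) = det (dn_matrix ft n (mu m) lam)"
    and "\<forall>m. trace (dn_matrix f n (mu m) lam) = trace (dn_matrix ft n (mu m) lam)"
  shows "(f 0 = ft 0 \<and> f 1 = ft 1) \<or> (f 0 = ft 1 \<and> f 1 = ft 0)"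
proof -
  note lim_f = dn_matrix_trace_det_limits[OF assms(6,8,5), of n lam]
    and lim_ft = dn_matrix_trace_det_limits[OF assms(7,9,5), of n lam]
  have "1 / sqrt (f 0) + 1 / sqrt (f 1) = 1 / sqrt (ft 0) + 1 / sqrt (ft 1)"
    using LIMSEQ_unique[OF lim_f(1)] lim_ft(1) assms(13) by simp
  moreover have "1 / sqrt (f 0) * (1 / sqrt (f 1)) = 1 / sqrt (ft 0) * (1 / sqrt (ft 1))"
    using LIMSEQ_unique[OF lim_f(2)] lim_ft(2) assms(12) by simp
  ultimately show ?thesis
    using sum_prod_eq_imp_eq_or_swap assms(8,9) by fastforce
qed
end
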